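(* Let $q=p^{m_0}$ with $p$ prime and let $\rho$ be a permutation of $\{0,1,2,\ldots\}$. Let $n,m$ be nonnegative integers and $y\in\mathbb{Z}_p$. Set $$s_1:=\sum_{k=0}^{m}\binom{m+n-k}{k,\,m-k,\,n-k}\binom{y}{\rho_\ast(m+n-k)},$$ $$s_2:=\sum_{k=0}^{\rho_\ast m}\binom{\rho_\ast m+\rho_\ast n-k}{k,\,\rho_\ast m-k,\,\rho_\ast n-k}\binom{y}{\rho_\ast m+\rho_\ast n-k}.$$ Then $s_1\equiv s_2\pmod{p}$ in $\mathbb{Z}_p$.
   Context: For $y\in\mathbb{Z}_p$ written $q$-adically as $y=\sum_{j\ge0}c_jq^j$ with $0\le c_j<q$, set $\rho_\ast y:=\sum_{j\ge0}c_jq^{\rho(j)}$; it maps nonnegative integers to nonnegative integers. For $y\in\mathbb{Z}_p$ and an integer $j\ge0$, $\binom{y}{j}=y(y-1)\cdots(y-j+1)/j!\in\mathbb{Z}_p$. The multinomial coefficient $\binom{N}{a,b,c}$ with $a+b+c=N$ denotes $N!/(a!\,b!\,c!)$, taken to be $0$ if any of $a,b,c$ is negative. *)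

theory Defs
  imports Complex_Main "HOL-Computational_Algebra.Primes"
begin

text \<open>p-adic integers, modelled as the inverse limit of the rings Z/p^k Z:
  a p-adic integer is a compatible sequence x with 0 <= x k < p^k and
  x k = x (k+1) mod p^k.\<close>

definition Zp :: "nat \<Rightarrow> (nat \<Rightarrow> int) set" where
  "Zp p = {x. \<forall>k. 0 \<le> x k \<and> x k < int p ^ k \<and> x k = x (Suc k) mod int p ^ k}"

definition zp_add :: "nat \<Rightarrow> (nat \<Rightarrow> int) \<Rightarrow> (nat \<Rightarrow> int) \<Rightarrow> (nat \<Rightarrow> int)" where
  "zp_add p x y = (\<lambda>k. (x k + y k) mod int p ^ k)"

definition zp_mul :: "nat \<Rightarrow> (nat \<Rightarrow> int) \<Rightarrow> (nat \<Rightarrow> int) \<Rightarrow> (nat \<Rightarrow> int)" where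
  "zp_mul p x y = (\<lambda>k. (x k * y k) mod int p ^ k)"

definition zp_of_int :: "nat \<Rightarrow> int \<Rightarrow> (nat \<Rightarrow> int)" where
  "zp_of_int p c = (\<lambda>k. c mod int p ^ k)"

definition zp_sum :: "nat \<Rightarrow> ('a \<Rightarrow> nat \<Rightarrow> int) \<Rightarrow> 'a set \<Rightarrow> (nat \<Rightarrow> int)" where
  "zp_sum p f A = (\<lambda>k. (\<Sum>a\<in>A. f a k) mod int p ^ k)"

text \<open>Its residue mod p^k is the integer binomial of any integer representative
  of y modulo p^(k + v_p(j!)); since v_p(j!) \<le> j, the representative
  y (k+j) suffices.\<close>
definition zp_binom :: "nat \<Rightarrow> (nat \<Rightarrow> int) \<Rightarrow> nat \<Rightarrow> (nat \<Rightarrow> int)" where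
  "zp_binom p y j = (\<lambda>k. \<lfloor>(of_int (y (k + j)) :: rat) gchoose j\<rfloor> mod int p ^ k)"

definition zp_cong_p :: "nat \<Rightarrow> (nat \<Rightarrow> int) \<Rightarrow> (nat \<Rightarrow> int) \<Rightarrow> bool" where
  "zp_cong_p p x y \<longleftrightarrow> (\<exists>z\<in>Zp p. x = zp_add p y (zp_mul p (zp_of_int p (int p)) z))"

definition rho_star :: "nat \<Rightarrow> (nat \<Rightarrow> nat) \<Rightarrow> nat \<Rightarrow> nat" where
  "rho_star q \<rho> y = (\<Sum>j\<le>y. (y div q ^ j mod q) * q ^ (\<rho> j))"

definition multinom3 :: "int \<Rightarrow> int \<Rightarrow> int \<Rightarrow> int" where
  "multinom3 a b c = (if a < 0 \<or> b < 0 \<or> c < 0 then 0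
     else int (fact (nat (a + b + c)) div (fact (nat a) * fact (nat b) * fact (nat c))))"

end

(*
  Modulo p, binom(y, j) for y in Z_p only depends on an integer representative Y of y
  of high enough p-adic precision, since binom(Y, j) mod p^t only depends on Y mod p^(t+j).
  For an integer Y, Lucas' theorem in base q = p^m0 (valid modulo p because
  (1 + X)^q = 1 + X^q over Z/p) gives binom(Y, rho_* j) = binom(Y', j) mod p, where Y' is
  Y with its q-adic digits moved back along rho.  The identity
    binom(Y, M) binom(Y, N) = sum_k multinom(M+N-k; k, M-k, N-k) binom(Y, M+N-k)
  turns s_1 into binom(Y', m) binom(Y', n) = binom(Y, rho_* m) binom(Y, rho_* n) mod p,
  and the latter expands to s_2.
*)

theory Submission
  imports Defs "HOL-Number_Theory.Cong"
begin

section \<open>Binomial coefficients modulo prime powers\<close>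

lemma prime_power_dvd_mult_cancel:
  fixes p :: nat
  assumes "prime p" "0 < i" "i < p ^ d" "p ^ (c + d) dvd i * x"
  shows "p ^ (c + 1) dvd x"
  using assms(2-4)
proof (induction d arbitrary: i)
  case 0
  then show ?case by simp
next
  case (Suc d)
  show ?case
  proof (cases "p dvd i")
    case True
    then obtain i' where i': "i = p * i'" by blast
    have "0 < p" using assms(1) prime_gt_0_nat by blast
    then have "0 < i'" "i' < p ^ d" "p ^ (c + d) dvd i' * x"
      using Suc.prems i' by (auto simp: mult.assoc)
    then show ?thesis using Suc.IH by blast
  next
    case False
    then have "coprime (p ^ (c + Suc d)) i"
      using assms(1) by (simp add: prime_imp_coprime)
    then have "p ^ (c + Suc d) dvd x"
      using Suc.prems(3) by (simp add: coprime_dvd_mult_right_iff)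
    then show ?thesis by (rule dvd_trans[rotated]) (simp add: le_imp_power_dvd)
  qed
qed

lemma prime_power_dvd_choose:
  fixes p :: nat
  assumes "prime p" "0 < i" "i < p ^ d" "p ^ (c + d) dvd n"
  shows "p ^ (c + 1) dvd n choose i"
proof -
  have "i * (n choose i) = n * ((n - 1) choose (i - 1))"
    using assms(2) by (rule times_binomial_minus1_eq)
  then have "p ^ (c + d) dvd i * (n choose i)"
    using assms(4) by (metis dvd_mult2)
  then show ?thesis using prime_power_dvd_mult_cancel[OF assms(1-3)] by blast
qed

lemma choose_add_multiple_prime_power_cong:
  fixes p :: nat
  assumes "prime p"
  shows "[(p ^ (t + j) * s + b) choose j = b choose j] (mod p ^ t)"
proof -
  define T where "T = p ^ (t + j) * s"
  have "[(\<Sum>k\<le>j. (T choose k) * (b choose (j - k))) = (\<Sum>k\<le>j. if k = 0 then b choose j else 0)] (mod p ^ t)"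
  proof (rule cong_sum)
    fix k assume "k \<in> {..j}"
    then have "k < p ^ j"
      using power_gt_expt[of p j] prime_gt_1_nat[OF assms] by simp
    then have "0 < k \<Longrightarrow> p ^ (t + 1) dvd T choose k"
      using prime_power_dvd_choose[OF assms, of k j t T] by (simp add: T_def)
    then have "0 < k \<Longrightarrow> p ^ t dvd T choose k"
      by (meson dvd_trans le_add1 le_imp_power_dvd)
    then show "[(T choose k) * (b choose (j - k)) = (if k = 0 then b choose j else 0)] (mod p ^ t)"
      by (auto simp: cong_0_iff)
  qed
  then show ?thesis by (simp add: vandermonde T_def)
qed

lemma choose_cong_prime_power:
  fixes p :: nat
  assumes "prime p" "[a = b] (mod p ^ (t + j))"
  shows "[a choose j = b choose j] (mod p ^ t)"
proof -
  have shift: "[s * p ^ (t + j) + c choose j = c choose j] (mod p ^ t)" for c s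
    using choose_add_multiple_prime_power_cong[OF assms(1), of t j s c] by (simp add: ac_simps)
  show ?thesis
  proof (cases "b \<le> a")
    case True
    then obtain s where "a = s * p ^ (t + j) + b" using assms(2) cong_le_nat by blast
    then show ?thesis using shift by simp
  next
    case False
    then have "a \<le> b" by simp
    then obtain s where "b = s * p ^ (t + j) + a"
      using cong_sym[OF assms(2)] cong_le_nat by blast
    then show ?thesis using cong_sym[OF shift] by simp
  qed
qed

section \<open>Lucas' theorem in base \<open>q = p ^ e\<close>\<close>

text \<open>The binomial form of \<open>(1 + X) ^ q = 1 + X ^ q\<close> over \<open>\<int>/p\<close>.\<close>

lemma choose_add_prime_power_cong:
  fixes p q :: nat
  assumes "prime p" "q = p ^ e" "0 < e"
  shows "[(q + x) choose n = (x choose n) + (if q \<le> n then x choose (n - q) else 0)] (mod p)"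
proof -
  have "0 < q" using assms prime_gt_0_nat by simp
  have "[(\<Sum>k\<le>n. (q choose k) * (x choose (n - k)))
        = (\<Sum>k\<le>n. (if k = 0 then x choose n else 0) + (if k = q then x choose (n - q) else 0))] (mod p)"
  proof (rule cong_sum)
    fix k
    show "[(q choose k) * (x choose (n - k))
        = (if k = 0 then x choose n else 0) + (if k = q then x choose (n - q) else 0)] (mod p)"
    proof (cases "0 < k \<and> k < q")
      case True
      then have "p ^ (0 + 1) dvd q choose k"
        using prime_power_dvd_choose[OF assms(1), of k e 0 q] assms(2) by simp
      then show ?thesis using True by (simp add: cong_0_iff)
    next
      case False
      then show ?thesis using \<open>0 < q\<close> by (auto simp: binomial_eq_0)
    qed
  qed
  then show ?thesis by (cases "q \<le> n") (simp_all add: vandermonde sum.distrib)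
qed

lemma lucas_prime_power_step:
  fixes p q :: nat
  assumes "prime p" "q = p ^ e" "0 < e" "b < q"
  shows "[(a * q + b) choose n = (a choose (n div q)) * (b choose (n mod q))] (mod p)"
proof (induction a arbitrary: n)
  case 0
  show ?case
    using assms(4) by (cases "n < q") (auto simp: binomial_eq_0 div_greater_zero_iff)
next
  case (Suc a)
  have "0 < q" using assms prime_gt_0_nat by simp
  have "Suc a * q + b = q + (a * q + b)" by simp
  then have step: "[Suc a * q + b choose n
      = (a * q + b choose n) + (if q \<le> n then a * q + b choose (n - q) else 0)] (mod p)"
    using choose_add_prime_power_cong[OF assms(1-3), of "a * q + b" n] by (simp only:)
  show ?case
  proof (cases "q \<le> n")
    case False
    then have "[Suc a * q + b choose n = a * q + b choose n] (mod p)"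
      using step by simp
    also have "[a * q + b choose n = (a choose (n div q)) * (b choose (n mod q))] (mod p)"
      by (rule Suc.IH)
    also have "(a choose (n div q)) * (b choose (n mod q)) = (Suc a choose (n div q)) * (b choose (n mod q))"
      using False by simp
    finally show ?thesis .
  next
    case True
    then obtain r where r: "n div q = Suc r" "(n - q) div q = r" "(n - q) mod q = n mod q"
      using \<open>0 < q\<close> by (simp add: le_div_geq le_mod_geq)
    have "[Suc a * q + b choose n = (a * q + b choose n) + (a * q + b choose (n - q))] (mod p)"
      using step True by simp
    also have "[(a * q + b choose n) + (a * q + b choose (n - q))
        = (a choose Suc r) * (b choose (n mod q)) + (a choose r) * (b choose (n mod q))] (mod p)"
      using Suc.IH[of n] Suc.IH[of "n - q"] r by (intro cong_add) simp_all
    also have "(a choose Suc r) * (b choose (n mod q)) + (a choose r) * (b choose (n mod q))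
        = (Suc a choose (n div q)) * (b choose (n mod q))"
      using r by (simp add: algebra_simps)
    finally show ?thesis .
  qed
qed

abbreviation digit :: "nat \<Rightarrow> nat \<Rightarrow> nat \<Rightarrow> nat" where
  "digit q x i \<equiv> x div q ^ i mod q"

lemma lucas_prime_power_iter:
  fixes p q :: nat
  assumes "prime p" "q = p ^ e" "0 < e"
  shows "[Y choose J = (\<Prod>i<D. digit q Y i choose digit q J i) * (Y div q ^ D choose J div q ^ D)] (mod p)"
proof (induction D)
  case 0
  then show ?case by simp
next
  case (Suc D)
  have "0 < q" using assms prime_gt_0_nat by simp
  have "Y div q ^ Suc D = Y div q ^ D div q" "J div q ^ Suc D = J div q ^ D div q"
    by (metis div_mult2_eq power_Suc2)+
  then have "[Y div q ^ D choose J div q ^ D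
      = (digit q Y D choose digit q J D) * (Y div q ^ Suc D choose J div q ^ Suc D)] (mod p)"
    using lucas_prime_power_step[OF assms, of "digit q Y D" "Y div q ^ D div q" "J div q ^ D"] \<open>0 < q\<close>
    by (simp add: mult.commute)
  then have "[(\<Prod>i<D. digit q Y i choose digit q J i) * (Y div q ^ D choose J div q ^ D)
      = (\<Prod>i<Suc D. digit q Y i choose digit q J i) * (Y div q ^ Suc D choose J div q ^ Suc D)] (mod p)"
    unfolding prod.lessThan_Suc mult.assoc by (rule cong_scalar_left)
  then show ?case using Suc.IH by (rule cong_trans[rotated])
qed

lemma lucas_prime_power:
  fixes p q :: nat
  assumes "prime p" "q = p ^ e" "0 < e" "finite S" "\<And>i. i \<notin> S \<Longrightarrow> digit q J i = 0"
  shows "[Y choose J = (\<Prod>i\<in>S. digit q Y i choose digit q J i)] (mod p)"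
proof -
  have "1 < q" using assms(1-3) prime_gt_1_nat one_less_power by blast
  have small: "J div q ^ i = 0" if "J \<le> i" for i
  proof -
    have "J < q ^ J" using power_gt_expt \<open>1 < q\<close> by simp
    also have "q ^ J \<le> q ^ i" using that \<open>1 < q\<close> by (simp add: power_increasing)
    finally show ?thesis by simp
  qed
  have "(\<Prod>i<J. digit q Y i choose digit q J i) = (\<Prod>i\<in>{..<J} \<union> S. digit q Y i choose digit q J i)"
    using assms(4) small by (intro prod.mono_neutral_left) (auto simp: not_less)
  also have "\<dots> = (\<Prod>i\<in>S. digit q Y i choose digit q J i)"
    using assms(4,5) by (intro prod.mono_neutral_right) auto
  finally show ?thesis
    using lucas_prime_power_iter[OF assms(1-3), of Y J J] small by simp
qed

lemma digit_sum_powers: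
  fixes q :: nat
  assumes "0 < q" "\<forall>i<B. h i < q"
  shows "digit q (\<Sum>i<B. h i * q ^ i) l = (if l < B then h l else 0)"
  using assms(2)
proof (induction B arbitrary: h l)
  case 0
  then show ?case by simp
next
  case (Suc B)
  define S where "S = (\<Sum>i<B. h (Suc i) * q ^ i)"
  have split: "(\<Sum>i<Suc B. h i * q ^ i) = h 0 + q * S"
    unfolding S_def
    by (subst sum.lessThan_Suc_shift) (simp add: sum_distrib_left ac_simps del: sum.lessThan_Suc)
  have "h 0 < q" using Suc.prems by simp
  show ?case
  proof (cases l)
    case 0
    then show ?thesis using split \<open>h 0 < q\<close> by simp
  next
    case (Suc l')
    have "(h 0 + q * S) div q ^ l = S div q ^ l'"
      using Suc \<open>h 0 < q\<close> assms(1) by (simp add: div_mult2_eq)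
    moreover have "digit q S l' = (if l' < B then h (Suc l') else 0)"
      unfolding S_def by (rule Suc.IH) (use Suc.prems in auto)
    ultimately show ?thesis using split Suc by simp
  qed
qed

lemma digit_sum_distinct_powers:
  fixes q :: nat
  assumes "0 < q" "finite A" "inj_on g A" "\<forall>a\<in>A. h a < q"
  shows "digit q (\<Sum>a\<in>A. h a * q ^ g a) l = (if l \<in> g ` A then h (inv_into A g l) else 0)"
proof -
  define h' where "h' l = (if l \<in> g ` A then h (inv_into A g l) else 0)" for l
  define E where "E = Suc (Max (g ` A))"
  have "g ` A \<subseteq> {..<E}"
    using assms(2) by (auto simp: E_def less_Suc_eq_le)
  have "(\<Sum>a\<in>A. h a * q ^ g a) = (\<Sum>l\<in>g ` A. h' l * q ^ l)"
    using assms(3) by (simp add: sum.reindex h'_def inv_into_f_f)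
  also have "\<dots> = (\<Sum>l<E. h' l * q ^ l)"
    using \<open>g ` A \<subseteq> {..<E}\<close> by (intro sum.mono_neutral_left) (auto simp: h'_def)
  finally have sums: "(\<Sum>a\<in>A. h a * q ^ g a) = (\<Sum>l<E. h' l * q ^ l)" .
  have "\<forall>l<E. h' l < q"
    using assms(1,4) by (auto simp: h'_def inv_into_into)
  then have "digit q (\<Sum>l<E. h' l * q ^ l) l = h' l"
    using digit_sum_powers[OF assms(1)] \<open>g ` A \<subseteq> {..<E}\<close> by (auto simp: h'_def)
  then show ?thesis unfolding sums h'_def .
qed

lemma digit_rho_star:
  fixes q :: nat
  assumes "1 < q" "inj \<rho>"
  shows "digit q (rho_star q \<rho> j) (\<rho> i) = digit q j i"
proof -
  have "digit q (rho_star q \<rho> j) (\<rho> i) = (if i \<le> j then digit q j i else 0)"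
    unfolding rho_star_def using assms
    by (subst digit_sum_distinct_powers) (auto simp: inj_on_subset[OF assms(2)] inj_eq inv_into_f_f)
  moreover have "digit q j i = 0" if "j < i"
  proof -
    have "j < q ^ i" using that power_gt_expt[of q i] assms(1) by simp
    then show ?thesis by simp
  qed
  ultimately show ?thesis by auto
qed

lemma digit_rho_star_notin_range:
  fixes q :: nat
  assumes "0 < q" "inj \<rho>" "l \<notin> range \<rho>"
  shows "digit q (rho_star q \<rho> j) l = 0"
  unfolding rho_star_def using assms
  by (subst digit_sum_distinct_powers) (auto intro: inj_on_subset)

text \<open>Lucas' theorem on both sides: the base-\<open>q\<close> digits of \<open>rho_star q \<rho> j\<close> are those of \<open>j\<close>
  moved along \<open>\<rho>\<close>.\<close>

lemma choose_rho_star_cong: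
  fixes p q :: nat
  assumes "prime p" "q = p ^ e" "0 < e" "inj \<rho>" "j < q ^ D"
  shows "[Y choose rho_star q \<rho> j = (\<Sum>i<D. digit q Y (\<rho> i) * q ^ i) choose j] (mod p)"
proof -
  define Y' where "Y' = (\<Sum>i<D. digit q Y (\<rho> i) * q ^ i)"
  have "1 < q" using assms(1-3) prime_gt_1_nat one_less_power by blast
  have digit_Y': "digit q Y' i = digit q Y (\<rho> i)" if "i < D" for i
    using digit_sum_powers[of q D "\<lambda>i. digit q Y (\<rho> i)"] that \<open>1 < q\<close> by (simp add: Y'_def)
  have digit_j: "digit q j i = 0" if "D \<le> i" for i
  proof -
    have "q ^ D \<le> q ^ i" using that \<open>1 < q\<close> by (simp add: power_increasing)
    then show ?thesis using assms(5) by simp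
  qed
  have digit_rho_j: "digit q (rho_star q \<rho> j) l = 0" if l: "l \<notin> \<rho> ` {..<D}" for l
  proof (cases "l \<in> range \<rho>")
    case True
    then obtain i where "l = \<rho> i" "D \<le> i" using l by force
    then show ?thesis using digit_rho_star[OF \<open>1 < q\<close> assms(4)] digit_j by simp
  next
    case False
    then show ?thesis using digit_rho_star_notin_range \<open>1 < q\<close> assms(4) by simp
  qed
  have "[Y choose rho_star q \<rho> j
      = (\<Prod>l\<in>\<rho> ` {..<D}. digit q Y l choose digit q (rho_star q \<rho> j) l)] (mod p)"
    using lucas_prime_power[OF assms(1-3)] digit_rho_j by blast
  also have "(\<Prod>l\<in>\<rho> ` {..<D}. digit q Y l choose digit q (rho_star q \<rho> j) l)
      = (\<Prod>i<D. digit q Y' i choose digit q j i)"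
    using assms(4) \<open>1 < q\<close>
    by (simp add: prod.reindex inj_on_subset digit_rho_star digit_Y')
  also have "[(\<Prod>i<D. digit q Y' i choose digit q j i) = Y' choose j] (mod p)"
    using lucas_prime_power[OF assms(1-3), of "{..<D}" j Y'] digit_j by (simp add: cong_sym_eq)
  finally show ?thesis unfolding Y'_def .
qed

section \<open>A product formula for binomial coefficients\<close>

lemma choose_mult_choose_eq_sum:
  fixes Y M N :: nat
  shows "(Y choose M) * (Y choose N) =
    (\<Sum>k\<le>M. if k \<le> N then (M choose k) * (M + N - k choose M) * (Y choose (M + N - k)) else 0)"
proof -
  define f where "f k = (M choose k) * (M + N - k choose M) * (Y choose (M + N - k))" for k
  have "(Y choose M) * (Y choose N) = (\<Sum>k\<le>N. f k)"
  proof (cases "M \<le> Y")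
    case False
    then show ?thesis by (simp add: f_def binomial_eq_0)
  next
    case True
    have "Y choose N = (\<Sum>k\<le>N. (M choose k) * (Y - M choose (N - k)))"
      using vandermonde[of M "Y - M" N] True by simp
    moreover have "(Y choose M) * (Y - M choose (N - k)) = (Y choose (M + N - k)) * (M + N - k choose M)"
      if "k \<le> N" for k
    proof (cases "M + N - k \<le> Y")
      case True
      then show ?thesis using choose_mult[of M "M + N - k" Y] that by (simp add: mult.commute)
    next
      case False
      then show ?thesis using that \<open>M \<le> Y\<close> by (simp add: binomial_eq_0)
    qed
    ultimately show ?thesis
      by (simp add: f_def sum_distrib_left ac_simps)
  qed
  also have "\<dots> = (\<Sum>k\<in>{k\<in>{..M}. k \<le> N}. f k)"
    by (rule sum.mono_neutral_cong_right) (auto simp: f_def binomial_eq_0)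
  also have "\<dots> = (\<Sum>k\<le>M. if k \<le> N then f k else 0)"
    by (rule sum.inter_filter) simp
  finally show ?thesis unfolding f_def .
qed

lemma multinom3_eq_choose_mult:
  fixes k M N :: nat
  assumes "k \<le> M"
  shows "multinom3 (int k) (int M - int k) (int N - int k) =
    (if k \<le> N then int ((M choose k) * (M + N - k choose M)) else 0)"
proof (cases "k \<le> N")
  case False
  then show ?thesis unfolding multinom3_def by simp
next
  case True
  have "fact (M + N - k) = fact M * fact (N - k) * (M + N - k choose M)"
    using binomial_fact_lemma[of M "M + N - k"] True assms by simp
  moreover have "fact M = fact k * fact (M - k) * (M choose k)"
    using binomial_fact_lemma[of k M] assms by simp
  ultimately have "(fact (M + N - k) :: nat) =
      (fact k * fact (M - k) * fact (N - k)) * ((M choose k) * (M + N - k choose M))"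
    by (simp add: mult_ac)
  moreover have "nat (int k + (int M - int k) + (int N - int k)) = M + N - k"
    using True assms by simp
  ultimately show ?thesis
    unfolding multinom3_def using True assms by (simp add: nat_diff_distrib)
qed

lemma choose_mult_choose_eq_multinom3_sum:
  fixes Y M N :: nat
  shows "int ((Y choose M) * (Y choose N)) =
    (\<Sum>k\<le>M. multinom3 (int k) (int M - int k) (int N - int k) * int (Y choose (M + N - k)))"
  unfolding choose_mult_choose_eq_sum of_nat_sum
  by (rule sum.cong) (auto simp: multinom3_eq_choose_mult)

lemma multinom3_sum_rho_star_cong:
  fixes p q :: nat
  assumes "prime p" "q = p ^ e" "0 < e" "inj \<rho>" "M = rho_star q \<rho> m" "N = rho_star q \<rho> n"
  shows "[(\<Sum>k\<le>m. multinom3 (int k) (int m - int k) (int n - int k) * int (Y choose rho_star q \<rho> (m + n - k)))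
        = (\<Sum>k\<le>M. multinom3 (int k) (int M - int k) (int N - int k) * int (Y choose (M + N - k)))] (mod int p)"
proof -
  define Y' where "Y' = (\<Sum>i<Suc (m + n). digit q Y (\<rho> i) * q ^ i)"
  have key: "[int (Y choose rho_star q \<rho> j) = int (Y' choose j)] (mod int p)" if "j \<le> m + n" for j
  proof -
    have "1 < q" using assms(1-3) prime_gt_1_nat one_less_power by blast
    then have "j < q ^ Suc (m + n)"
      using that power_gt_expt[of q "Suc (m + n)"] by simp
    then show ?thesis
      unfolding Y'_def cong_int_iff by (rule choose_rho_star_cong[OF assms(1-4)])
  qed
  have "[(\<Sum>k\<le>m. multinom3 (int k) (int m - int k) (int n - int k) * int (Y choose rho_star q \<rho> (m + n - k)))
      = (\<Sum>k\<le>m. multinom3 (int k) (int m - int k) (int n - int k) * int (Y' choose (m + n - k)))] (mod int p)"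
    by (intro cong_sum cong_mult cong_refl key) simp
  also have "(\<Sum>k\<le>m. multinom3 (int k) (int m - int k) (int n - int k) * int (Y' choose (m + n - k)))
      = int (Y' choose m) * int (Y' choose n)"
    by (simp flip: choose_mult_choose_eq_multinom3_sum)
  also have "[int (Y' choose m) * int (Y' choose n) = int (Y choose M) * int (Y choose N)] (mod int p)"
    using key[of m] key[of n] assms(5,6) by (intro cong_mult) (simp_all add: cong_sym_eq)
  also have "int (Y choose M) * int (Y choose N)
      = (\<Sum>k\<le>M. multinom3 (int k) (int M - int k) (int N - int k) * int (Y choose (M + N - k)))"
    by (simp flip: choose_mult_choose_eq_multinom3_sum)
  finally show ?thesis .
qed

section \<open>Binomial coefficients in \<open>Z\<^sub>p\<close>\<close>

lemma Zp_nonneg: "y \<in> Zp p \<Longrightarrow> 0 \<le> y k"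
  unfolding Zp_def by blast

lemma Zp_cong:
  assumes "y \<in> Zp p" "a \<le> b"
  shows "[y a = y b] (mod int p ^ a)"
  using assms(2)
proof (induction b rule: dec_induct)
  case base
  then show ?case by simp
next
  case (step b)
  have "y b = y (Suc b) mod int p ^ b"
    using assms(1) unfolding Zp_def by blast
  then have "[y b = y (Suc b)] (mod int p ^ b)"
    unfolding cong_def by simp
  then have "[y b = y (Suc b)] (mod int p ^ a)"
    by (rule cong_dvd_modulus) (simp add: step.hyps le_imp_power_dvd)
  with step.IH show ?case by (rule cong_trans)
qed

lemma Zp_choose_cong:
  fixes p :: nat
  assumes "prime p" "y \<in> Zp p" "t + j \<le> a" "a \<le> b"
  shows "[int (nat (y a) choose j) = int (nat (y b) choose j)] (mod int p ^ t)"
proof -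
  have "[int (nat (y a)) = int (nat (y b))] (mod int (p ^ a))"
    using Zp_cong[OF assms(2,4)] Zp_nonneg[OF assms(2)] by simp
  then have "[nat (y a) = nat (y b)] (mod p ^ (t + j))"
    unfolding cong_int_iff by (rule cong_dvd_modulus_nat) (simp add: assms(3) le_imp_power_dvd)
  then have "[nat (y a) choose j = nat (y b) choose j] (mod p ^ t)"
    by (rule choose_cong_prime_power[OF assms(1)])
  then show ?thesis by (simp flip: cong_int_iff)
qed

lemma zp_binom_eq_choose:
  assumes "y \<in> Zp p"
  shows "zp_binom p y j t = int (nat (y (t + j)) choose j) mod int p ^ t"
proof -
  have "(of_int (y (t + j)) :: rat) gchoose j = of_nat (nat (y (t + j)) choose j)"
    using Zp_nonneg[OF assms] by (simp add: binomial_gbinomial)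
  then show ?thesis unfolding zp_binom_def by simp
qed

lemma zp_sum_binomials_eq:
  assumes "y \<in> Zp p"
  shows "zp_sum p (\<lambda>k. zp_mul p (zp_of_int p (c k)) (zp_binom p y (J k))) A
     = (\<lambda>t. (\<Sum>k\<in>A. c k * int (nat (y (t + J k)) choose J k)) mod int p ^ t)"
  unfolding zp_sum_def zp_mul_def zp_of_int_def zp_binom_eq_choose[OF assms]
  by (simp add: mod_simps)

lemma zp_cong_p_of_compatible:
  fixes p :: nat and X W :: "nat \<Rightarrow> int"
  assumes "0 < p"
    and X: "\<And>t. [X t = X (Suc t)] (mod int p ^ t)"
    and W: "\<And>t. [W t = W (Suc t)] (mod int p ^ t)"
    and "[X 1 = W 1] (mod int p)"
  shows "zp_cong_p p (\<lambda>t. X t mod int p ^ t) (\<lambda>t. W t mod int p ^ t)"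
proof -
  define D where "D t = X t - W t" for t
  have D: "[D t = D (Suc t)] (mod int p ^ t)" for t
    unfolding D_def using X W by (rule cong_diff)
  have p_dvd_D: "int p dvd D (Suc t)" for t
  proof (induction t)
    case 0
    then show ?case using assms(4) by (simp add: D_def cong_iff_dvd_diff)
  next
    case (Suc t)
    have "[D (Suc t) = D (Suc (Suc t))] (mod int p)"
      using D by (rule cong_dvd_modulus) simp
    then show ?case using Suc.IH by (simp add: cong_dvd_iff)
  qed
  text \<open>The witness is \<open>(X - W) / p\<close>; its level-\<open>t\<close> component is read off at level \<open>t + 1\<close>,
    where \<open>X - W\<close> is known modulo \<open>p ^ (t + 1)\<close>.\<close>
  define z where "z t = (D (Suc t) div int p) mod int p ^ t" for t
  have "z \<in> Zp p"
    unfolding Zp_def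
  proof (intro CollectI allI conjI)
    fix t
    show "0 \<le> z t" "z t < int p ^ t" unfolding z_def using assms(1) by simp_all
    obtain u where u: "D (Suc t) = int p * u" using p_dvd_D by blast
    have "int p ^ Suc t dvd D (Suc (Suc t)) - D (Suc t)"
      using cong_sym[OF D[of "Suc t"]] by (simp only: cong_iff_dvd_diff)
    then obtain r where "D (Suc (Suc t)) = D (Suc t) + int p ^ Suc t * r"
      by (metis dvdE diff_add_cancel add.commute)
    then have "D (Suc (Suc t)) div int p = D (Suc t) div int p + int p ^ t * r"
      using u assms(1) by (simp add: algebra_simps)
    then show "z t = z (Suc t) mod int p ^ t"
      unfolding z_def by (simp add: mod_mod_cancel)
  qed
  moreover have "X t mod int p ^ t = zp_add p (\<lambda>t. W t mod int p ^ t) (zp_mul p (zp_of_int p (int p)) z) t" for t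
  proof -
    have "zp_add p (\<lambda>t. W t mod int p ^ t) (zp_mul p (zp_of_int p (int p)) z) t
       = (W t + D (Suc t)) mod int p ^ t"
      using p_dvd_D[of t] unfolding zp_add_def zp_mul_def zp_of_int_def z_def by (simp add: mod_simps)
    also have "\<dots> = (W t + D t) mod int p ^ t"
      using D[of t] unfolding cong_def by (metis mod_add_right_eq)
    finally show ?thesis by (simp add: D_def)
  qed
  ultimately show ?thesis unfolding zp_cong_p_def by blast
qed

lemma Zp_binomial_sum_cong:
  fixes p :: nat
  assumes "prime p" "y \<in> Zp p" "\<And>k. k \<in> A \<Longrightarrow> t + J k \<le> a k" "\<And>k. k \<in> A \<Longrightarrow> a k \<le> b k"
  shows "[(\<Sum>k\<in>A. c k * int (nat (y (a k)) choose J k))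
      = (\<Sum>k\<in>A. c k * int (nat (y (b k)) choose J k))] (mod int p ^ t)"
  using Zp_choose_cong[OF assms(1,2)] assms(3,4) by (intro cong_sum cong_mult cong_refl) simp

lemma zp_cong_p_binomial_combinations:
  fixes p :: nat
  assumes "prime p" "y \<in> Zp p" "\<forall>k\<in>A. J k < L" "\<forall>k\<in>B. J' k < L"
    and "[(\<Sum>k\<in>A. c k * int (nat (y L) choose J k))
        = (\<Sum>k\<in>B. c' k * int (nat (y L) choose J' k))] (mod int p)"
  shows "zp_cong_p p (zp_sum p (\<lambda>k. zp_mul p (zp_of_int p (c k)) (zp_binom p y (J k))) A)
                      (zp_sum p (\<lambda>k. zp_mul p (zp_of_int p (c' k)) (zp_binom p y (J' k))) B)"
proof -
  define X where "X t = (\<Sum>k\<in>A. c k * int (nat (y (t + J k)) choose J k))" for t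
  define W where "W t = (\<Sum>k\<in>B. c' k * int (nat (y (t + J' k)) choose J' k))" for t
  have "[X t = X (Suc t)] (mod int p ^ t)" "[W t = W (Suc t)] (mod int p ^ t)" for t
    unfolding X_def W_def by (rule Zp_binomial_sum_cong[OF assms(1,2)]; simp)+
  moreover have "[X 1 = W 1] (mod int p)"
  proof -
    have "[X 1 = (\<Sum>k\<in>A. c k * int (nat (y L) choose J k))] (mod int p)"
      unfolding X_def using assms(3) by (intro Zp_binomial_sum_cong[OF assms(1,2), of _ 1, simplified]) auto
    moreover have "[W 1 = (\<Sum>k\<in>B. c' k * int (nat (y L) choose J' k))] (mod int p)"
      unfolding W_def using assms(4) by (intro Zp_binomial_sum_cong[OF assms(1,2), of _ 1, simplified]) auto
    ultimately show ?thesis using assms(5) by (metis cong_sym cong_trans)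
  qed
  moreover have "0 < p" using assms(1) prime_gt_0_nat by blast
  ultimately show ?thesis
    unfolding zp_sum_binomials_eq[OF assms(2)] X_def[symmetric] W_def[symmetric]
    by (intro zp_cong_p_of_compatible)
qed

theorem proposition7p5:
  fixes p m0 q :: nat and \<rho> :: "nat \<Rightarrow> nat" and n m :: nat and y :: "nat \<Rightarrow> int"
  assumes "prime p" and "m0 \<ge> 1" and "q = p ^ m0"
    and "bij \<rho>"
    and "y \<in> Zp p"
  shows "zp_cong_p p
     (zp_sum p (\<lambda>k. zp_mul p
          (zp_of_int p (multinom3 (int k) (int m - int k) (int n - int k)))
          (zp_binom p y (rho_star q \<rho> (m + n - k)))) {..m})
     (let M = rho_star q \<rho> m; N = rho_star q \<rho> n in
      zp_sum p (\<lambda>k. zp_mul p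
          (zp_of_int p (multinom3 (int k) (int M - int k) (int N - int k)))
          (zp_binom p y (M + N - k))) {..M})"
proof -
  define M where "M = rho_star q \<rho> m"
  define N where "N = rho_star q \<rho> n"
  define L where "L = Suc (M + N + (\<Sum>k\<le>m. rho_star q \<rho> (m + n - k)))"
  have "\<forall>k\<in>{..m}. rho_star q \<rho> (m + n - k) < L"
    unfolding L_def by (auto intro!: le_imp_less_Suc trans_le_add2 member_le_sum)
  moreover have "\<forall>k\<in>{..M}. M + N - k < L"
    by (auto simp: L_def)
  moreover have "0 < m0" "inj \<rho>"
    using assms(2,4) bij_is_inj by auto
  ultimately show ?thesis
    unfolding Let_def M_def[symmetric] N_def[symmetric]
    using multinom3_sum_rho_star_cong[OF assms(1,3)] M_def N_def
    by (intro zp_cong_p_binomial_combinations[OF assms(1,5)]) auto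
qed

end
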